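(* Assume $\mu_n\to0$, $n^{1/2}\mu_n\to\infty$, and $\theta_n/\mu_n\to\zeta\in\mathbb R\cup\{-\infty,\infty\}$. 1. If $|\zeta|<1$, then $G_{A,n,\theta_n}$ converges weakly to the cdf $\mathbf 1(\cdot\ge-\zeta)$. 2. If $1\le|\zeta|<\infty$, then $G_{A,n,\theta_n}$ converges weakly to the cdf $\mathbf 1(\cdot\ge-1/\zeta)$. 3. If $|\zeta|=\infty$, then $G_{A,n,\theta_n}$ converges weakly to the cdf $\mathbf 1(\cdot\ge0)$.
   Context: Gaussian location model: for each sample size $n$, $y_1,\dots,y_n$ are i.i.d. $N(\theta,1)$ with $\theta\in\mathbb R$ unknown; $\bar y$ is their mean. $P_{n,\theta}$ denotes the probability governing a sample of size $n$ when $\theta$ is the true parameter. Given a nonrandom tuning parameter $\mu_n>0$, the adaptive LASSO estimator is $\hat\theta_A=0$ if $|\bar y|\le\mu_n$ and $\hat\theta_A=\bar y-\mu_n^2/\bar y$ if $|\bar y|>\mu_n$. $G_{A,n,\theta}$ denotes the cdf of $\mu_n^{-1}(\hat\theta_A-\theta)$ under $P_{n,\theta}$. *)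

theory Defs
  imports "HOL-Probability.Probability"
begin

definition sample_law :: "nat \<Rightarrow> real \<Rightarrow> (nat \<Rightarrow> real) measure" where
  "sample_law n \<theta> = PiM {..<n} (\<lambda>_. density lborel (normal_density \<theta> 1))"

definition sample_mean :: "nat \<Rightarrow> (nat \<Rightarrow> real) \<Rightarrow> real" where
  "sample_mean n y = (\<Sum>i<n. y i) / real n"

definition alasso :: "real \<Rightarrow> real \<Rightarrow> real" where
  "alasso m yb = (if \<bar>yb\<bar> \<le> m then 0 else yb - m\<^sup>2 / yb)"

definition G_A :: "(nat \<Rightarrow> real) \<Rightarrow> nat \<Rightarrow> real \<Rightarrow> real \<Rightarrow> real" where
  "G_A \<mu> n \<theta> x = measure (sample_law n \<theta>)
     {y \<in> space (sample_law n \<theta>). (alasso (\<mu> n) (sample_mean n y) - \<theta>) / \<mu> n \<le> x}"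

definition cdf_weak_conv :: "(nat \<Rightarrow> real \<Rightarrow> real) \<Rightarrow> (real \<Rightarrow> real) \<Rightarrow> bool" where
  "cdf_weak_conv Fs F \<longleftrightarrow> (\<forall>x. isCont F x \<longrightarrow> (\<lambda>n. Fs n x) \<longlonglongrightarrow> F x)"

definition step_cdf :: "real \<Rightarrow> real \<Rightarrow> real" where
  "step_cdf c x = (if x \<ge> c then 1 else 0)"

end

theory Submission
  imports Defs
begin

(*
  Writing u = ybar / mu_n and tau_n = theta_n / mu_n, the rescaled error is
     (alasso mu_n ybar - theta_n) / mu_n = b(u) + (u - tau_n),
  where the bias function b(u) = -u for |u| <= 1 and b(u) = -1/u otherwise is
  1-Lipschitz.  Hence the rescaled error differs from the constant b(tau_n) by at
  most 2 |ybar - theta_n| / mu_n.  By Chebyshev's inequality for the normal sample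
  mean, P(|ybar - theta_n| >= delta * mu_n) <= 1 / (n (delta mu_n)^2) -> 0, so the
  rescaled error converges in probability to c = lim b(tau_n), and convergence in
  probability to a constant gives weak convergence of the cdfs to the step at c.
  Finally b is continuous with b(u) -> 0 as |u| -> infinity, so c = b(zeta), which
  is -zeta for |zeta| < 1, -1/zeta for 1 <= |zeta| < infinity, and 0 otherwise.
*)

section \<open>The bias function of the rescaled adaptive LASSO\<close>

text \<open>The deterministic part of the rescaled estimation error, as a function of
  the rescaled observation \<open>u = ybar / m\<close>.\<close>
definition alasso_bias :: "real \<Rightarrow> real" where
  "alasso_bias u = (if \<bar>u\<bar> \<le> 1 then - u else - 1 / u)"

lemma alasso_bias_inner: "\<bar>u\<bar> \<le> 1 \<Longrightarrow> alasso_bias u = - u"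
  by (simp add: alasso_bias_def)

text \<open>On the unit circle both formulas agree, so the outer formula holds on the
  closed region \<open>|u| \<ge> 1\<close>.\<close>
lemma alasso_bias_outer: "1 \<le> \<bar>u\<bar> \<Longrightarrow> alasso_bias u = - 1 / u"
  by (cases "\<bar>u\<bar> = 1") (auto simp: alasso_bias_def abs_if split: if_splits)

lemma alasso_rescaled:
  assumes "m > 0"
  shows "(alasso m v - t) / m = alasso_bias (v / m) + (v - t) / m"
  using assms by (auto simp: alasso_def alasso_bias_def abs_divide divide_le_eq_1_pos
      power2_eq_square field_simps)

text \<open>In the outer region \<open>|1/w - 1/u| = |u - w| / (|u| |w|) \<le> |u - w|\<close>.\<close>
lemma alasso_bias_lipschitz_outer:
  assumes u: "1 \<le> \<bar>u\<bar>" and w: "1 \<le> \<bar>w\<bar>"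
  shows "\<bar>alasso_bias u - alasso_bias w\<bar> \<le> \<bar>u - w\<bar>"
proof -
  have "\<bar>alasso_bias u - alasso_bias w\<bar> = \<bar>u - w\<bar> / (\<bar>u\<bar> * \<bar>w\<bar>)"
    using u w by (auto simp: alasso_bias_outer field_simps abs_divide abs_mult abs_minus_commute)
  also have "\<dots> \<le> \<bar>u - w\<bar>"
    using u w mult_mono[of 1 "\<bar>u\<bar>" 1 "\<bar>w\<bar>"] by (simp add: divide_le_eq mult_le_cancel_left1)
  finally show ?thesis .
qed

text \<open>Across the unit circle, pass through the point \<open>sgn w\<close>, which lies between
  \<open>u\<close> and \<open>w\<close> and belongs to both regions.\<close>
lemma alasso_bias_lipschitz_mixed:
  assumes u: "\<bar>u\<bar> \<le> 1" and w: "1 \<le> \<bar>w\<bar>"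
  shows "\<bar>alasso_bias u - alasso_bias w\<bar> \<le> \<bar>u - w\<bar>"
proof -
  define s where "s = sgn w"
  have s: "\<bar>s\<bar> = 1" and between: "\<bar>u - s\<bar> + \<bar>s - w\<bar> = \<bar>u - w\<bar>"
    using u w by (auto simp: s_def sgn_if)
  have "\<bar>alasso_bias u - alasso_bias w\<bar>
          \<le> \<bar>alasso_bias u - alasso_bias s\<bar> + \<bar>alasso_bias s - alasso_bias w\<bar>"
    by linarith
  also have "\<bar>alasso_bias u - alasso_bias s\<bar> = \<bar>u - s\<bar>"
    using u s by (simp add: alasso_bias_inner abs_minus_commute)
  also have "\<bar>alasso_bias s - alasso_bias w\<bar> \<le> \<bar>s - w\<bar>"
    using s w by (intro alasso_bias_lipschitz_outer) simp_all
  finally show ?thesis using between by linarith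
qed

text \<open>The bias function is 1-Lipschitz; this is what makes the rescaled error
  insensitive to small rescaled deviations of the sample mean.\<close>
lemma alasso_bias_lipschitz: "\<bar>alasso_bias u - alasso_bias w\<bar> \<le> \<bar>u - w\<bar>"
proof -
  consider "\<bar>u\<bar> \<le> 1" "\<bar>w\<bar> \<le> 1" | "1 \<le> \<bar>u\<bar>" "1 \<le> \<bar>w\<bar>"
    | "\<bar>u\<bar> \<le> 1" "1 \<le> \<bar>w\<bar>" | "1 \<le> \<bar>u\<bar>" "\<bar>w\<bar> \<le> 1"
    by linarith
  then show ?thesis
  proof cases
    case 1
    then show ?thesis by (simp add: alasso_bias_inner abs_minus_commute)
  next
    case 2
    then show ?thesis by (rule alasso_bias_lipschitz_outer)
  next
    case 3
    then show ?thesis by (rule alasso_bias_lipschitz_mixed)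
  next
    case 4
    then show ?thesis
      using alasso_bias_lipschitz_mixed[of w u] by (simp add: abs_minus_commute)
  qed
qed

lemma alasso_deviation:
  assumes m: "m > 0"
  shows "\<bar>(alasso m v - t) / m - alasso_bias (t / m)\<bar> \<le> 2 * \<bar>v - t\<bar> / m"
proof -
  have "\<bar>alasso_bias (v / m) - alasso_bias (t / m)\<bar> \<le> \<bar>v / m - t / m\<bar>"
    by (rule alasso_bias_lipschitz)
  also have "v / m - t / m = (v - t) / m"
    by (rule diff_divide_distrib[symmetric])
  finally have "\<bar>alasso_bias (v / m) - alasso_bias (t / m)\<bar> \<le> \<bar>(v - t) / m\<bar>" .
  moreover have "\<bar>(v - t) / m\<bar> = \<bar>v - t\<bar> / m"
    using m by (simp add: abs_divide)
  ultimately show ?thesis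
    unfolding alasso_rescaled[OF m] by linarith
qed

text \<open>Being Lipschitz, the bias function is continuous.\<close>
lemma alasso_bias_tendsto:
  assumes "\<tau> \<longlonglongrightarrow> z"
  shows "(\<lambda>n. alasso_bias (\<tau> n)) \<longlonglongrightarrow> alasso_bias z"
proof -
  have "(\<lambda>n. \<bar>\<tau> n - z\<bar>) \<longlonglongrightarrow> 0"
    using tendsto_rabs_zero[OF LIM_zero[OF assms]] .
  moreover have "eventually (\<lambda>n. norm (alasso_bias (\<tau> n) - alasso_bias z) \<le> \<bar>\<tau> n - z\<bar>) sequentially"
    by (rule always_eventually) (simp add: alasso_bias_lipschitz)
  ultimately have "(\<lambda>n. alasso_bias (\<tau> n) - alasso_bias z) \<longlonglongrightarrow> 0"
    by (rule Lim_null_comparison[rotated])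
  then show ?thesis by (rule LIM_zero_cancel)
qed

lemma alasso_bias_vanishes:
  assumes "filterlim (\<lambda>n. \<bar>\<tau> n\<bar>) at_top sequentially"
  shows "(\<lambda>n. alasso_bias (\<tau> n)) \<longlonglongrightarrow> 0"
proof (rule Lim_null_comparison)
  have "eventually (\<lambda>n. 1 \<le> \<bar>\<tau> n\<bar>) sequentially"
    using assms unfolding filterlim_at_top by blast
  then show "eventually (\<lambda>n. norm (alasso_bias (\<tau> n)) \<le> 1 / \<bar>\<tau> n\<bar>) sequentially"
    by eventually_elim (simp add: alasso_bias_outer abs_divide)
  have "filterlim (\<lambda>n. \<bar>\<tau> n\<bar>) at_infinity sequentially"
    using assms by (rule filterlim_at_top_imp_at_infinity)
  then show "(\<lambda>n. 1 / \<bar>\<tau> n\<bar>) \<longlonglongrightarrow> 0"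
    by (rule tendsto_divide_0[OF tendsto_const])
qed

section \<open>Convergence in probability to a constant\<close>

lemma isCont_step_cdf_imp_ne:
  assumes "isCont (step_cdf c) x"
  shows "x \<noteq> c"
proof
  assume x: "x = c"
  have "(step_cdf c \<longlongrightarrow> step_cdf c c) (at_left c)"
    using assms unfolding x isCont_def filterlim_at_split by blast
  moreover have "(step_cdf c \<longlongrightarrow> 0) (at_left c)"
  proof (rule tendsto_eventually)
    have "eventually (\<lambda>y. y \<in> {c - 1<..<c}) (at_left c)"
      by (rule eventually_at_left_real) simp
    then show "eventually (\<lambda>y. step_cdf c y = 0) (at_left c)"
      by eventually_elim (simp add: step_cdf_def)
  qed
  ultimately have "step_cdf c c = 0"
    using tendsto_unique[OF trivial_limit_at_left_real] by blast
  then show False by (simp add: step_cdf_def)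
qed

lemma cdf_weak_conv_to_constant:
  fixes M :: "nat \<Rightarrow> 'a measure" and X :: "nat \<Rightarrow> 'a \<Rightarrow> real"
  assumes prob: "\<And>n. prob_space (M n)"
    and meas: "\<And>n. X n \<in> borel_measurable (M n)"
    and conv: "\<And>\<epsilon>. \<epsilon> > 0 \<Longrightarrow>
      (\<lambda>n. measure (M n) {y \<in> space (M n). \<epsilon> \<le> \<bar>X n y - c\<bar>}) \<longlonglongrightarrow> 0"
  shows "cdf_weak_conv (\<lambda>n x. measure (M n) {y \<in> space (M n). X n y \<le> x}) (step_cdf c)"
  unfolding cdf_weak_conv_def
proof (intro allI impI)
  fix x assume "isCont (step_cdf c) x"
  then have xc: "x \<noteq> c" by (rule isCont_step_cdf_imp_ne)
  define F where "F n = measure (M n) {y \<in> space (M n). X n y \<le> x}" for n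
  define p where "p n = measure (M n) {y \<in> space (M n). \<bar>x - c\<bar> \<le> \<bar>X n y - c\<bar>}" for n
  have p: "p \<longlonglongrightarrow> 0" unfolding p_def using xc by (intro conv) simp
  have bounds: "(c < x \<longrightarrow> 1 - p n \<le> F n \<and> F n \<le> 1) \<and> (x < c \<longrightarrow> 0 \<le> F n \<and> F n \<le> p n)" for n
  proof -
    interpret prob_space "M n" by (rule prob)
    let ?S = "{y \<in> space (M n). X n y \<le> x}" and ?B = "{y \<in> space (M n). \<bar>x - c\<bar> \<le> \<bar>X n y - c\<bar>}"
    have S: "?S \<in> events" and B: "?B \<in> events" using meas[of n] by measurable
    show ?thesis
    proof (intro conjI impI)
      assume "c < x"
      then have "space (M n) - ?B \<subseteq> ?S" by auto
      then have "prob (space (M n) - ?B) \<le> prob ?S" using S by (rule finite_measure_mono)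
      then show "1 - p n \<le> F n" using prob_compl[OF B] by (simp add: F_def p_def)
      show "F n \<le> 1" unfolding F_def by (rule prob_le_1)
    next
      assume "x < c"
      then have "?S \<subseteq> ?B" by auto
      then show "F n \<le> p n" unfolding F_def p_def using B by (rule finite_measure_mono)
      show "0 \<le> F n" unfolding F_def by (rule measure_nonneg)
    qed
  qed
  show "(\<lambda>n. F n) \<longlonglongrightarrow> step_cdf c x"
  proof (cases "c < x")
    case True
    have lower: "eventually (\<lambda>n. 1 - p n \<le> F n) sequentially"
      and upper: "eventually (\<lambda>n. F n \<le> 1) sequentially"
      using bounds True by simp_all
    have "(\<lambda>n. 1 - p n) \<longlonglongrightarrow> 1 - 0" by (intro tendsto_diff tendsto_const p)
    then have "F \<longlonglongrightarrow> 1" using tendsto_sandwich[OF lower upper _ tendsto_const] by simp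
    with True show ?thesis by (simp add: step_cdf_def)
  next
    case False
    with xc have "x < c" by simp
    then have lower: "eventually (\<lambda>n. 0 \<le> F n) sequentially"
      and upper: "eventually (\<lambda>n. F n \<le> p n) sequentially"
      using bounds by simp_all
    have "F \<longlonglongrightarrow> 0" using tendsto_sandwich[OF lower upper tendsto_const p] .
    with \<open>x < c\<close> show ?thesis by (simp add: step_cdf_def)
  qed
qed

section \<open>Concentration of the Gaussian sample mean\<close>

lemma prob_space_sample_law: "prob_space (sample_law n \<theta>)"
  unfolding sample_law_def by (intro prob_space_PiM prob_space_normal_density) simp

lemma sample_mean_measurable [measurable]: "sample_mean n \<in> borel_measurable (sample_law n \<theta>)"
  unfolding sample_mean_def sample_law_def by measurable

lemma indep_vars_PiM_coordinates:
  assumes "I \<noteq> {}" and prob: "\<And>i. i \<in> I \<Longrightarrow> prob_space (M i)"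
  shows "prob_space.indep_vars (PiM I M) M (\<lambda>i \<omega>. \<omega> i) I"
proof -
  interpret prob_space "PiM I M" using prob by (rule prob_space_PiM)
  have component: "distr (PiM I M) (M i) (\<lambda>\<omega>. \<omega> i) = M i" if "i \<in> I" for i
    using prob that by (rule distr_PiM_component)
  show ?thesis
  proof (subst indep_vars_iff_distr_eq_PiM'[OF \<open>I \<noteq> {}\<close>])
    have "distr (PiM I M) (PiM I M) (\<lambda>x. \<lambda>i\<in>I. x i) = distr (PiM I M) (PiM I M) (\<lambda>x. x)"
      by (rule distr_cong) (auto simp: space_PiM)
    also have "\<dots> = PiM I (\<lambda>i. distr (PiM I M) (M i) (\<lambda>\<omega>. \<omega> i))"
      using component by (auto intro!: PiM_cong)
    finally show "distr (PiM I M) (PiM I M) (\<lambda>x. \<lambda>i\<in>I. x i) = PiM I (\<lambda>i. distr (PiM I M) (M i) (\<lambda>\<omega>. \<omega> i))" .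
  qed auto
qed

lemma sample_mean_normal:
  assumes n: "n \<ge> 1"
  shows "distributed (sample_law n \<theta>) lborel (\<lambda>y. sample_mean n y - \<theta>)
           (normal_density 0 (1 / sqrt (real n)))"
proof -
  define N where "N = density lborel (normal_density \<theta> 1)"
  have law: "sample_law n \<theta> = PiM {..<n} (\<lambda>_. N)" unfolding N_def sample_law_def ..
  have probN: "prob_space N" unfolding N_def by (rule prob_space_normal_density) simp
  have setsN: "sets N = sets borel" unfolding N_def by simp
  interpret prob_space "sample_law n \<theta>" by (rule prob_space_sample_law)
  have nonempty: "{..<n} \<noteq> {}" using n by (auto simp: lessThan_empty_iff)
  have "indep_vars (\<lambda>_. N) (\<lambda>i \<omega>. \<omega> i) {..<n}"
    unfolding law using nonempty probN by (rule indep_vars_PiM_coordinates)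
  then have indep: "indep_vars (\<lambda>_. borel) (\<lambda>i \<omega>. \<omega> i) {..<n}"
    using indep_vars_compose2[of "\<lambda>_. N" _ "{..<n}" "\<lambda>i x. x" "\<lambda>_. borel"]
    by (simp add: measurable_cong_sets[OF setsN refl])
  have coord: "distributed (sample_law n \<theta>) lborel (\<lambda>\<omega>. \<omega> i) (normal_density \<theta> 1)"
    if "i \<in> {..<n}" for i
    unfolding distributed_def
  proof (intro conjI)
    have "distr (sample_law n \<theta>) lborel (\<lambda>\<omega>. \<omega> i) = distr (sample_law n \<theta>) N (\<lambda>\<omega>. \<omega> i)"
      by (rule distr_cong) (auto simp: setsN)
    then show "distr (sample_law n \<theta>) lborel (\<lambda>\<omega>. \<omega> i) = density lborel (normal_density \<theta> 1)"
      using distr_PiM_component[OF probN that] by (simp add: law N_def)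
    show "random_variable lborel (\<lambda>\<omega>. \<omega> i)"
      unfolding law using that by (simp add: measurable_cong_sets[OF refl setsN[symmetric]])
  qed simp
  have sum: "distributed (sample_law n \<theta>) lborel (\<lambda>y. \<Sum>i<n. y i)
               (normal_density (real n * \<theta>) (sqrt (real n)))"
    using sum_indep_normal[OF _ nonempty indep, of "\<lambda>_. 1" "\<lambda>_. \<theta>"] coord by simp
  have "distributed (sample_law n \<theta>) lborel (\<lambda>y. - \<theta> + (1 / real n) * (\<Sum>i<n. y i))
          (normal_density (- \<theta> + (1 / real n) * (real n * \<theta>)) (\<bar>1 / real n\<bar> * sqrt (real n)))"
    using n by (intro normal_density_affine[OF sum]) auto
  moreover have "(\<lambda>y. - \<theta> + (1 / real n) * (\<Sum>i<n. y i)) = (\<lambda>y. sample_mean n y - \<theta>)"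
    by (simp add: sample_mean_def fun_eq_iff)
  moreover have "\<bar>1 / real n\<bar> * sqrt (real n) = 1 / sqrt (real n)"
    using n by (simp add: field_simps real_sqrt_mult_self)
  ultimately show ?thesis using n by simp
qed

lemma (in prob_space) normal_tail_bound:
  assumes \<sigma>: "\<sigma> > 0" and d: "d > 0"
    and X: "distributed M lborel X (normal_density 0 \<sigma>)"
  shows "prob {x \<in> space M. d \<le> \<bar>X x\<bar>} \<le> \<sigma>\<^sup>2 / d\<^sup>2"
proof -
  have "integrable lborel (\<lambda>x. normal_density 0 \<sigma> x * x ^ 2)"
    using integrable_normal_moment[of \<sigma> 0 2] \<sigma> by simp
  then have "integrable M (\<lambda>x. X x ^ 2)"
    using distributed_integrable[OF X, of "\<lambda>x. x ^ 2"] by simp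
  moreover have "random_variable borel X"
    using distributed_measurable[OF X] by simp
  ultimately have "prob {x \<in> space M. d \<le> \<bar>X x - expectation X\<bar>} \<le> variance X / d\<^sup>2"
    using d by (intro Chebyshev_inequality)
  then show ?thesis
    using normal_distributed_expectation[OF \<sigma> X] normal_distributed_variance[OF \<sigma> X] by simp
qed

lemma sample_mean_tail:
  assumes n: "n \<ge> 1" and d: "d > 0"
  shows "measure (sample_law n \<theta>) {y \<in> space (sample_law n \<theta>). d \<le> \<bar>sample_mean n y - \<theta>\<bar>}
           \<le> 1 / (real n * d\<^sup>2)"
proof -
  interpret prob_space "sample_law n \<theta>" by (rule prob_space_sample_law)
  have "(1 / sqrt (real n))\<^sup>2 = 1 / real n" using n by (simp add: power_divide)
  then show ?thesis
    using normal_tail_bound[OF _ d sample_mean_normal[OF n]] n by simp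
qed

lemma sample_mean_concentration:
  fixes \<mu> \<theta> :: "nat \<Rightarrow> real"
  assumes pos: "\<And>n. \<mu> n > 0"
    and rate: "filterlim (\<lambda>n. sqrt (real n) * \<mu> n) at_top sequentially"
    and \<delta>: "\<delta> > 0"
  shows "(\<lambda>n. measure (sample_law n (\<theta> n))
            {y \<in> space (sample_law n (\<theta> n)). \<delta> * \<mu> n \<le> \<bar>sample_mean n y - \<theta> n\<bar>}) \<longlonglongrightarrow> 0"
proof (rule tendsto_sandwich[of "\<lambda>_. 0"])
  define r where "r n = 1 / (real n * (\<delta> * \<mu> n)\<^sup>2)" for n
  have "filterlim (\<lambda>n. (\<delta> * (sqrt (real n) * \<mu> n))\<^sup>2) at_top sequentially"
    by (intro filterlim_pow_at_top filterlim_tendsto_pos_mult_at_top[OF tendsto_const \<delta> rate]) simp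
  then have "(\<lambda>n. inverse ((\<delta> * (sqrt (real n) * \<mu> n))\<^sup>2)) \<longlonglongrightarrow> 0"
    by (rule tendsto_inverse_0_at_top)
  moreover have "inverse ((\<delta> * (sqrt (real n) * \<mu> n))\<^sup>2) = r n" for n
    by (simp add: r_def power_mult_distrib divide_inverse mult_ac)
  ultimately show "r \<longlonglongrightarrow> 0" by simp
  show "eventually (\<lambda>n. measure (sample_law n (\<theta> n))
            {y \<in> space (sample_law n (\<theta> n)). \<delta> * \<mu> n \<le> \<bar>sample_mean n y - \<theta> n\<bar>} \<le> r n) sequentially"
    using eventually_ge_at_top[of 1]
    by eventually_elim (use \<delta> pos in \<open>simp add: r_def sample_mean_tail\<close>)
qed (simp_all add: measure_nonneg)

section \<open>Limit law of the rescaled adaptive LASSO\<close>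

lemma G_A_weak_conv:
  fixes \<mu> \<theta> :: "nat \<Rightarrow> real"
  assumes pos: "\<And>n. \<mu> n > 0"
    and rate: "filterlim (\<lambda>n. sqrt (real n) * \<mu> n) at_top sequentially"
    and bias: "(\<lambda>n. alasso_bias (\<theta> n / \<mu> n)) \<longlonglongrightarrow> c"
  shows "cdf_weak_conv (\<lambda>n. G_A \<mu> n (\<theta> n)) (step_cdf c)"
proof -
  define P where "P n = sample_law n (\<theta> n)" for n
  define T where "T n y = (alasso (\<mu> n) (sample_mean n y) - \<theta> n) / \<mu> n" for n y
  have G: "(\<lambda>n. G_A \<mu> n (\<theta> n)) = (\<lambda>n x. measure (P n) {y \<in> space (P n). T n y \<le> x})"
    unfolding G_A_def P_def T_def ..
  show ?thesis unfolding G
  proof (rule cdf_weak_conv_to_constant)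
    show "prob_space (P n)" for n unfolding P_def by (rule prob_space_sample_law)
    show "T n \<in> borel_measurable (P n)" for n unfolding P_def T_def alasso_def by measurable
    fix \<epsilon> :: real assume \<epsilon>: "\<epsilon> > 0"
    let ?far = "\<lambda>n. {y \<in> space (P n). \<epsilon> / 4 * \<mu> n \<le> \<bar>sample_mean n y - \<theta> n\<bar>}"
    have far: "(\<lambda>n. measure (P n) (?far n)) \<longlonglongrightarrow> 0"
      unfolding P_def using \<epsilon> by (intro sample_mean_concentration[OF pos rate]) simp
    have "eventually (\<lambda>n. \<bar>alasso_bias (\<theta> n / \<mu> n) - c\<bar> < \<epsilon> / 2) sequentially"
      using tendstoD[OF bias, of "\<epsilon> / 2"] \<epsilon> by (simp add: dist_real_def)
    then have upper: "eventually (\<lambda>n. measure (P n) {y \<in> space (P n). \<epsilon> \<le> \<bar>T n y - c\<bar>}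
                                \<le> measure (P n) (?far n)) sequentially"
    proof eventually_elim
      case (elim n)
      interpret prob_space "P n" unfolding P_def by (rule prob_space_sample_law)
      have "{y \<in> space (P n). \<epsilon> \<le> \<bar>T n y - c\<bar>} \<subseteq> ?far n"
      proof safe
        fix y assume "y \<in> space (P n)" "\<epsilon> \<le> \<bar>T n y - c\<bar>"
        moreover have "\<bar>T n y - alasso_bias (\<theta> n / \<mu> n)\<bar> \<le> 2 * \<bar>sample_mean n y - \<theta> n\<bar> / \<mu> n"
          unfolding T_def by (rule alasso_deviation[OF pos])
        ultimately have "\<epsilon> / 4 \<le> \<bar>sample_mean n y - \<theta> n\<bar> / \<mu> n" using elim by linarith
        then show "\<epsilon> / 4 * \<mu> n \<le> \<bar>sample_mean n y - \<theta> n\<bar>"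
          using pos[of n] by (simp add: le_divide_eq)
      qed
      moreover have "?far n \<in> events" unfolding P_def by measurable
      ultimately show ?case by (rule finite_measure_mono)
    qed
    have lower: "eventually (\<lambda>n. 0 \<le> measure (P n) {y \<in> space (P n). \<epsilon> \<le> \<bar>T n y - c\<bar>}) sequentially"
      by (intro always_eventually allI measure_nonneg)
    show "(\<lambda>n. measure (P n) {y \<in> space (P n). \<epsilon> \<le> \<bar>T n y - c\<bar>}) \<longlonglongrightarrow> 0"
      using tendsto_sandwich[OF lower upper tendsto_const far] .
  qed
qed

theorem theorem4:
  fixes \<mu> \<theta> :: "nat \<Rightarrow> real" and \<zeta> :: ereal
  assumes pos: "\<And>n. \<mu> n > 0"
    and mu0: "\<mu> \<longlonglongrightarrow> 0"
    and rate: "filterlim (\<lambda>n. sqrt (real n) * \<mu> n) at_top sequentially"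
    and zeta: "(\<lambda>n. ereal (\<theta> n / \<mu> n)) \<longlonglongrightarrow> \<zeta>"
  shows "(\<bar>\<zeta>\<bar> < 1 \<longrightarrow>
            cdf_weak_conv (\<lambda>n. G_A \<mu> n (\<theta> n)) (step_cdf (- real_of_ereal \<zeta>)))
       \<and> (1 \<le> \<bar>\<zeta>\<bar> \<and> \<bar>\<zeta>\<bar> < \<infinity> \<longrightarrow>
            cdf_weak_conv (\<lambda>n. G_A \<mu> n (\<theta> n)) (step_cdf (- 1 / real_of_ereal \<zeta>)))
       \<and> (\<bar>\<zeta>\<bar> = \<infinity> \<longrightarrow>
            cdf_weak_conv (\<lambda>n. G_A \<mu> n (\<theta> n)) (step_cdf 0))"
proof (cases "\<bar>\<zeta>\<bar> = \<infinity>")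
  case False
  then obtain z where z: "\<zeta> = ereal z" by (cases \<zeta>) auto
  have "(\<lambda>n. alasso_bias (\<theta> n / \<mu> n)) \<longlonglongrightarrow> alasso_bias z"
    using zeta unfolding z by (intro alasso_bias_tendsto) simp
  then have "cdf_weak_conv (\<lambda>n. G_A \<mu> n (\<theta> n)) (step_cdf (alasso_bias z))"
    by (rule G_A_weak_conv[OF pos rate])
  then show ?thesis
    using z by (auto simp: alasso_bias_inner alasso_bias_outer)
next
  case True
  have "(\<lambda>n. \<bar>ereal (\<theta> n / \<mu> n)\<bar>) \<longlonglongrightarrow> \<infinity>"
    using tendsto_abs_ereal[OF zeta] True by simp
  then have "filterlim (\<lambda>n. \<bar>\<theta> n / \<mu> n\<bar>) at_top sequentially"
    by (simp add: tendsto_PInfty_eq_at_top)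
  then have "cdf_weak_conv (\<lambda>n. G_A \<mu> n (\<theta> n)) (step_cdf 0)"
    by (intro G_A_weak_conv[OF pos rate] alasso_bias_vanishes)
  then show ?thesis using True by simp
qed

end
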